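(* Let $\mathcal M$ be the configuration space of ordered quadruples of distinct points of $\partial\mathbf{H}^2_{\mathbb C}$ modulo the diagonal action of $\mathrm{PU}(2,1)$, with the quotient topology. Then the map $\tau:\mathcal M\to\mathbb C^2\times\mathbb R$, $$\tau:[p_1,p_2,p_3,p_4]\mapsto \bigl(X_1,X_2,\mathbb A\bigr)=\bigl(X(p_1,p_2,p_3,p_4),\,X(p_1,p_3,p_2,p_4),\,\mathbb A(p_1,p_2,p_3)\bigr),$$ is a homeomorphism onto the set $\mathbb M$ of points $(X_1,X_2,A)\in\mathbb C_*^2\times\mathbb R$ (with $\mathbb C_*=\mathbb C\setminus\{0\}$, and $\mathbb M$ carrying the subspace topology from $\mathbb C^2\times\mathbb R$) satisfying $$-2\,\mathrm{Re}(X_1+X_2)-2\,\mathrm{Re}\bigl(X_1\overline{X}_2e^{-2iA}\bigr)+|X_1|^2+|X_2|^2+1=0,$$ $$-\pi/2\le A\le\pi/2,\qquad \mathrm{Re}(X_1e^{-iA})\ge 0.$$ In particular $\mathcal M$ is homeomorphic to $\mathbb M$.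
   Context: Let $\mathbb C^{n,1}$ denote $\mathbb C^{n+1}$ with the Hermitian form $\langle Z,W\rangle=z_1\overline{w}_{n+1}+z_2\overline{w}_2+\cdots+z_n\overline{w}_n+z_{n+1}\overline{w}_1$ of signature $(n,1)$. Complex hyperbolic space $\mathbf H^n_{\mathbb C}$ is the set of negative lines ($\langle Z,Z\rangle<0$) in $\mathbb P\mathbb C^n$; its boundary $\partial\mathbf H^n_{\mathbb C}$ is the set of isotropic (null) lines ($\langle Z,Z\rangle=0$, $Z\neq0$). $\mathrm{PU}(n,1)$ (projectivized unitary group of the form) is the holomorphic isometry group and acts on $\partial\mathbf H^n_{\mathbb C}$. A lift of a boundary point $p$ is a nonzero null vector $P$ representing it. For an ordered quadruple of distinct boundary points with lifts $P_i$, the Korányi–Reimann complex cross-ratio is $X(p_1,p_2,p_3,p_4)=\dfrac{\langle P_3,P_1\rangle\langle P_4,P_2\rangle}{\langle P_4,P_1\rangle\langle P_3,P_2\rangle}$ (independent of lifts). For an ordered triple of distinct boundary points, Cartan's angular invariant is $\mathbb A(p_1,p_2,p_3)=\arg\bigl(-\langle P_1,P_2\rangle\langle P_2,P_3\rangle\langle P_3,P_1\rangle\bigr)\in[-\pi/2,\pi/2]$. Here $n=2$. *)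

theory Defs
  imports "HOL-Analysis.Analysis"
begin

definition quotient_topology :: "'a topology \<Rightarrow> ('a \<Rightarrow> 'b) \<Rightarrow> 'b topology" where
  "quotient_topology X f = topology (\<lambda>U. U \<subseteq> f ` topspace X \<and>
       openin X {x \<in> topspace X. f x \<in> U})"

type_synonym cvec = "complex ^ 3"

definition herm :: "cvec \<Rightarrow> cvec \<Rightarrow> complex" where
  "herm Z W = Z$1 * cnj (W$3) + Z$2 * cnj (W$2) + Z$3 * cnj (W$1)"

definition null_vecs :: "cvec set" where
  "null_vecs = {Z. Z \<noteq> 0 \<and> herm Z Z = 0}"

text \<open>The complex line through v, with the origin removed (a point of PC^2).\<close>
definition cline :: "cvec \<Rightarrow> cvec set" where
  "cline v = {c *s v | c. c \<noteq> 0}"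

text \<open>Boundary of complex hyperbolic 2-space: isotropic lines, with the quotient
  topology from the null cone (= subspace topology of PC^2).\<close>
definition bdry :: "cvec set set" where
  "bdry = cline ` null_vecs"

definition bdry_top :: "cvec set topology" where
  "bdry_top = quotient_topology (subtopology euclidean null_vecs) cline"

definition unitary21 :: "complex ^ 3 ^ 3 \<Rightarrow> bool" where
  "unitary21 U \<longleftrightarrow> (\<forall>Z W. herm (U *v Z) (U *v W) = herm Z W)"

text \<open>Action on boundary points (factors through PU(2,1)).\<close>
definition act :: "complex ^ 3 ^ 3 \<Rightarrow> cvec set \<Rightarrow> cvec set" where
  "act U p = (\<lambda>v. U *v v) ` p"

type_synonym quad = "cvec set \<times> cvec set \<times> cvec set \<times> cvec set"

definition act4 :: "complex ^ 3 ^ 3 \<Rightarrow> quad \<Rightarrow> quad" where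
  "act4 U q = (case q of (p1, p2, p3, p4) \<Rightarrow> (act U p1, act U p2, act U p3, act U p4))"

definition quads :: "quad set" where
  "quads = {(p1, p2, p3, p4). p1 \<in> bdry \<and> p2 \<in> bdry \<and> p3 \<in> bdry \<and> p4 \<in> bdry \<and>
     p1 \<noteq> p2 \<and> p1 \<noteq> p3 \<and> p1 \<noteq> p4 \<and> p2 \<noteq> p3 \<and> p2 \<noteq> p4 \<and> p3 \<noteq> p4}"

definition quads_top :: "quad topology" where
  "quads_top = subtopology (prod_topology bdry_top (prod_topology bdry_top
                 (prod_topology bdry_top bdry_top))) quads"

definition orbit4 :: "quad \<Rightarrow> quad set" where
  "orbit4 q = {q'. \<exists>U. unitary21 U \<and> q' = act4 U q}"

definition config_top :: "quad set topology" where
  "config_top = quotient_topology quads_top orbit4"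

definition lift :: "cvec set \<Rightarrow> cvec" where
  "lift p = (SOME v. v \<in> p)"

definition cross_ratio :: "cvec set \<Rightarrow> cvec set \<Rightarrow> cvec set \<Rightarrow> cvec set \<Rightarrow> complex" where
  "cross_ratio p1 p2 p3 p4 =
     (herm (lift p3) (lift p1) * herm (lift p4) (lift p2)) /
     (herm (lift p4) (lift p1) * herm (lift p3) (lift p2))"

definition cartan :: "cvec set \<Rightarrow> cvec set \<Rightarrow> cvec set \<Rightarrow> real" where
  "cartan p1 p2 p3 =
     Arg (- (herm (lift p1) (lift p2) * herm (lift p2) (lift p3) * herm (lift p3) (lift p1)))"

definition tau :: "quad set \<Rightarrow> complex \<times> complex \<times> real" where
  "tau c = (case (SOME q. q \<in> c) of (p1, p2, p3, p4) \<Rightarrow>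
      (cross_ratio p1 p2 p3 p4, cross_ratio p1 p3 p2 p4, cartan p1 p2 p3))"

definition Mset :: "(complex \<times> complex \<times> real) set" where
  "Mset = {(X1, X2, A). X1 \<noteq> 0 \<and> X2 \<noteq> 0 \<and>
     - 2 * Re (X1 + X2) - 2 * Re (X1 * cnj X2 * exp (- 2 * \<i> * of_real A))
       + (cmod X1)^2 + (cmod X2)^2 + 1 = 0 \<and>
     - pi / 2 \<le> A \<and> A \<le> pi / 2 \<and>
     Re (X1 * exp (- \<i> * of_real A)) \<ge> 0}"

end

theory Submission
  imports Defs
begin

text \<open>Every quadruple of distinct isotropic lines can be moved by U(2,1) to a normal form
  e1, e3, (w3, z3, 1), (w4, z4, 1) with |w3| = 1. For such a normal form the invariants
  (X1, X2, A) determine w3, w4, |z3|, |z4| and z4 * cnj z3, and the quadric equation of M is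
  precisely the compatibility condition |z4 * cnj z3| = |z4| |z3|. Hence over every point of M
  the normal forms make up a nonempty family whose members differ by a common rotation of z3
  and z4, which is realised by a diagonal unitary map: tau is a bijection onto M.
  It is continuous because the invariants are continuous on the open set of generic null
  quadruples and passing to lines is an open map. It is a quotient map because the normal
  forms are parametrised continuously by a closed subset of M \<times> S1 \<times> S1, on which the
  composite with tau is the projection to M, a closed map as S1 \<times> S1 is compact.\<close>

lemma exp_i_of_real:
  "cnj (exp (\<i> * of_real A)) = exp (- \<i> * of_real A)"
  "cnj (exp (- \<i> * of_real A)) = exp (\<i> * of_real A)"
  "exp (\<i> * of_real A) * exp (- \<i> * of_real A) = 1"
  "exp (\<i> * of_real A) + exp (- \<i> * of_real A) = of_real (2 * cos A)"
  "exp (- 2 * \<i> * of_real A) = (exp (- \<i> * of_real A))^2"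
proof -
  show "cnj (exp (\<i> * of_real A)) = exp (- \<i> * of_real A)"
    "cnj (exp (- \<i> * of_real A)) = exp (\<i> * of_real A)"
    by (simp_all add: exp_cnj)
  show "exp (\<i> * of_real A) * exp (- \<i> * of_real A) = 1" by (simp flip: exp_add)
  show "exp (\<i> * of_real A) + exp (- \<i> * of_real A) = of_real (2 * cos A)"
    by (simp add: complex_eq_iff Re_exp Im_exp)
  show "exp (- 2 * \<i> * of_real A) = (exp (- \<i> * of_real A))^2"
    by (simp add: power2_eq_square flip: exp_add) (simp add: mult.assoc)
qed

lemma cos_nonneg_imp_abs_le_pi_half:
  "-pi < (A::real) \<Longrightarrow> A \<le> pi \<Longrightarrow> cos A \<ge> 0 \<Longrightarrow> -pi/2 \<le> A \<and> A \<le> pi/2"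
  by (smt (verit) cos_minus cos_monotone_0_pi cos_monotone_minus_pi_0
    cos_pi_half minus_divide_divide minus_divide_right minus_pi_half_less_zero)

lemma exists_unit_polar: "\<exists>u. cmod u = 1 \<and> complex_of_real (cmod z) * u = z"
proof (cases "z = 0")
  case True thus ?thesis by (intro exI[of _ 1]) simp
next
  case False
  have "cmod (sgn z) = 1" using False by (simp add: norm_sgn)
  moreover have "complex_of_real (cmod z) * sgn z = z" using False
    by (simp add: sgn_div_norm divide_inverse scaleR_conv_of_real)
  ultimately show ?thesis by blast
qed

lemma norm_eq_1_mult_cnj: "cmod u = 1 \<Longrightarrow> u * cnj u = 1"
  by (simp add: complex_norm_square[symmetric])

lemma mult_cnj_of_real_times_unit:
  "cmod u = 1 \<Longrightarrow> complex_of_real r * u * cnj (complex_of_real r * u) = of_real (r^2)"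
  by (simp add: power2_eq_square mult_ac norm_eq_1_mult_cnj)

lemma common_unit_rotation:
  fixes s3 s4 :: complex
  assumes u: "cmod u = 1" and u': "cmod u' = 1" and v: "cmod v = 1" and v': "cmod v' = 1"
    and eq: "s4 * v * cnj (s3 * u) = s4 * v' * cnj (s3 * u')"
  shows "\<exists>c. cmod c = 1 \<and> s3 * u' = c * (s3 * u) \<and> s4 * v' = c * (s4 * v)"
proof (cases "s3 = 0")
  case True
  show ?thesis
  proof (cases "s4 = 0")
    case True
    with \<open>s3 = 0\<close> show ?thesis by (intro exI[of _ 1]) simp
  next
    case False
    with \<open>s3 = 0\<close> show ?thesis using v v' by (intro exI[of _ "v' / v"]) (auto simp: norm_divide)
  qed
next
  case s3: False
  have u0: "u \<noteq> 0" using u by auto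
  have "s4 * v' = (u' / u) * (s4 * v)"
  proof (cases "s4 = 0")
    case False
    have "v * cnj u = v' * cnj u'" using eq s3 False by simp
    hence "v * u' * (u * cnj u) = v' * u * (u' * cnj u')" by (simp add: algebra_simps)
    hence "v * u' = v' * u" using u u' norm_eq_1_mult_cnj by simp
    thus ?thesis using u0 by (simp add: field_simps)
  qed simp
  thus ?thesis using s3 u u' u0 by (intro exI[of _ "u' / u"]) (simp add: norm_divide)
qed

definition vec3 :: "complex \<Rightarrow> complex \<Rightarrow> complex \<Rightarrow> cvec" where
  "vec3 a b c = (\<chi> i. if i = 1 then a else if i = 2 then b else c)"

lemma vec3_nth [simp]: "vec3 a b c $ 1 = a" "vec3 a b c $ 2 = b" "vec3 a b c $ 3 = c"
  by (simp_all add: vec3_def)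

lemma cvec_eq_iff: "(Z::cvec) = W \<longleftrightarrow> Z$1 = W$1 \<and> Z$2 = W$2 \<and> Z$3 = W$3"
  by (simp add: vec_eq_iff forall_3)

lemma vec3_coordinates: "Z$3 \<noteq> 0 \<Longrightarrow> Z = Z$3 *s vec3 (Z$1 / Z$3) (Z$2 / Z$3) 1"
  by (simp add: cvec_eq_iff)

definition e1 :: cvec where "e1 = vec3 1 0 0"
definition e2 :: cvec where "e2 = vec3 0 1 0"
definition e3 :: cvec where "e3 = vec3 0 0 1"

lemma herm_smult_left [simp]: "herm (c *s Z) W = c * herm Z W"
  by (simp add: herm_def algebra_simps)
lemma herm_smult_right [simp]: "herm Z (c *s W) = cnj c * herm Z W"
  by (simp add: herm_def algebra_simps)
lemma herm_add_left: "herm (Z + Z') W = herm Z W + herm Z' W"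
  by (simp add: herm_def algebra_simps)
lemma herm_add_right: "herm W (Z + Z') = herm W Z + herm W Z'"
  by (simp add: herm_def algebra_simps)
lemma herm_diff_left: "herm (Z - Z') W = herm Z W - herm Z' W"
  by (simp add: herm_def algebra_simps)
lemma herm_diff_right: "herm W (Z - Z') = herm W Z - herm W Z'"
  by (simp add: herm_def algebra_simps)
lemma herm_cnj: "herm W Z = cnj (herm Z W)"
  by (simp add: herm_def algebra_simps)
lemma herm_eq_0_commute: "herm W Z = 0 \<longleftrightarrow> herm Z W = 0"
  using herm_cnj[of W Z] by auto

lemma herm_e1 [simp]: "herm Z e1 = Z$3" and herm_e3 [simp]: "herm Z e3 = Z$1"
  by (simp_all add: herm_def e1_def e3_def)

lemma herm_vec3: "herm (vec3 a b c) (vec3 a' b' c') = a * cnj c' + b * cnj b' + c * cnj a'"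
  by (simp add: herm_def)

lemma herm_nondeg: "(\<And>W. herm Z W = 0) \<Longrightarrow> Z = 0"
proof -
  assume h: "\<And>W. herm Z W = 0"
  have "Z$3 = 0" "Z$1 = 0" "Z$2 = 0"
    using h[of e1] h[of e3] h[of e2] by (simp_all add: herm_def e1_def e2_def e3_def)
  thus "Z = 0" by (simp add: cvec_eq_iff)
qed

lemma vec3_null_iff: "vec3 w z 1 \<in> null_vecs \<longleftrightarrow> w + cnj w + z * cnj z = 0"
  by (auto simp: null_vecs_def herm_def cvec_eq_iff algebra_simps)

lemma e1_null: "e1 \<in> null_vecs" and e3_null: "e3 \<in> null_vecs"
  by (simp_all add: null_vecs_def e1_def e3_def herm_def cvec_eq_iff)

lemma smult_in_null_vecs_iff: "c \<noteq> 0 \<Longrightarrow> c *s P \<in> null_vecs \<longleftrightarrow> P \<in> null_vecs"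
  by (auto simp: null_vecs_def vec_eq_iff)

text \<open>On the hyperplane z1 = z3 the form is 2 |z1|^2 + |z2|^2.\<close>
lemma null_eq_0_if_ends_eq:
  assumes "Z$1 = Z$3" "herm Z Z = 0" shows "Z = 0"
proof -
  have "Re (herm Z Z) = 2*((Re(Z$1))^2+(Im (Z$1))^2) + ((Re(Z$2))^2 + (Im(Z$2))^2)"
    using assms(1) by (simp add: herm_def power2_eq_square)
  hence e: "2*((Re(Z$1))^2+(Im (Z$1))^2) + ((Re(Z$2))^2 + (Im(Z$2))^2) = 0" using assms by simp
  have "(Re(Z$1))^2+(Im (Z$1))^2 = 0" "(Re(Z$2))^2+(Im (Z$2))^2 = 0"
    using e by (smt (verit) zero_le_power2)+
  hence "Z$1 = 0" "Z$2 = 0" by (auto simp: complex_eq_iff)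
  thus ?thesis using assms(1) by (simp add: cvec_eq_iff)
qed

lemma null_orthogonal_imp_proportional:
  assumes P: "P \<in> null_vecs" and Q: "Q \<in> null_vecs" and h: "herm P Q = 0"
  shows "\<exists>c. c \<noteq> 0 \<and> Q = c *s P"
proof -
  define vP where "vP = P$1 - P$3"
  define vQ where "vQ = Q$1 - Q$3"
  have PP: "herm P P = 0" "P \<noteq> 0" and QQ: "herm Q Q = 0" "Q \<noteq> 0"
    using P Q by (auto simp: null_vecs_def)
  have vP0: "vP \<noteq> 0"
    using null_eq_0_if_ends_eq[of P] PP vP_def by auto
  define W where "W = vQ *s P - vP *s Q"
  have "W$1 = W$3" by (simp add: W_def vP_def vQ_def algebra_simps)
  moreover have "herm W W = 0"
  proof -
    have hQP: "herm Q P = 0" using h herm_eq_0_commute by blast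
    show ?thesis unfolding W_def
      by (simp add: herm_diff_left herm_diff_right PP QQ h hQP)
  qed
  ultimately have "W = 0" by (rule null_eq_0_if_ends_eq)
  hence "Q = (vQ / vP) *s P"
    using vP0 by (simp add: W_def cvec_eq_iff field_simps)
  moreover have "vQ \<noteq> 0"
    using calculation QQ by auto
  ultimately show ?thesis using vP0 by (intro exI[of _ "vQ/vP"]) auto
qed

lemma cline_smult: "c \<noteq> 0 \<Longrightarrow> cline (c *s v) = cline v"
proof -
  assume c: "c \<noteq> 0"
  have "cline (c *s v) \<subseteq> cline v"
  proof
    fix x assume "x \<in> cline (c *s v)"
    then obtain d where d: "d \<noteq> 0" "x = d *s (c *s v)" by (auto simp: cline_def)
    have "x = (d * c) *s v" using d by (simp add: vector_smult_assoc)
    thus "x \<in> cline v" using d c by (auto simp: cline_def)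
  qed
  moreover have "cline v \<subseteq> cline (c *s v)"
  proof
    fix x assume "x \<in> cline v"
    then obtain d where d: "d \<noteq> 0" "x = d *s v" by (auto simp: cline_def)
    have "x = (d / c) *s (c *s v)" using d c by (simp add: vector_smult_assoc)
    moreover have "d / c \<noteq> 0" using d c by simp
    ultimately show "x \<in> cline (c *s v)" unfolding cline_def by blast
  qed
  ultimately show ?thesis by blast
qed

lemma in_cline_self: "v \<in> cline v"
  unfolding cline_def by (auto intro!: exI[of _ 1])

lemma cline_eq_iff: "cline x = cline v \<longleftrightarrow> (\<exists>c. c \<noteq> 0 \<and> x = c *s v)"
proof
  assume "cline x = cline v"
  then have "x \<in> cline v" using in_cline_self[of x] by simp
  then show "\<exists>c. c \<noteq> 0 \<and> x = c *s v" by (auto simp: cline_def)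
next
  assume "\<exists>c. c \<noteq> 0 \<and> x = c *s v"
  then show "cline x = cline v" using cline_smult by auto
qed

lemma lift_cline_proportional: "\<exists>c. c \<noteq> 0 \<and> lift (cline v) = c *s v"
proof -
  have "lift (cline v) \<in> cline v" unfolding lift_def by (rule someI, rule in_cline_self)
  thus ?thesis by (auto simp: cline_def)
qed

lemma cline_eq_iff_herm_eq_0:
  assumes "P \<in> null_vecs" "Q \<in> null_vecs"
  shows "cline P = cline Q \<longleftrightarrow> herm P Q = 0"
proof
  assume "cline P = cline Q"
  then obtain c where "P = c *s Q" using cline_eq_iff by blast
  thus "herm P Q = 0" using assms by (simp add: null_vecs_def)
next
  assume "herm P Q = 0"
  then obtain c where "c \<noteq> 0" "Q = c *s P" using null_orthogonal_imp_proportional assms by blast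
  thus "cline P = cline Q" using cline_smult by simp
qed

lemma in_bdry_iff: "p \<in> bdry \<longleftrightarrow> (\<exists>P \<in> null_vecs. p = cline P)"
  by (auto simp: bdry_def)

definition cross_ratio_vec :: "cvec \<Rightarrow> cvec \<Rightarrow> cvec \<Rightarrow> cvec \<Rightarrow> complex" where
  "cross_ratio_vec P1 P2 P3 P4 = (herm P3 P1 * herm P4 P2) / (herm P4 P1 * herm P3 P2)"

definition cartan_vec :: "cvec \<Rightarrow> cvec \<Rightarrow> cvec \<Rightarrow> complex" where
  "cartan_vec P1 P2 P3 = - (herm P1 P2 * herm P2 P3 * herm P3 P1)"

lemma cross_ratio_vec_smult:
  assumes "a \<noteq> 0" "b \<noteq> 0" "c \<noteq> 0" "d \<noteq> 0"
  shows "cross_ratio_vec (a *s P1) (b *s P2) (c *s P3) (d *s P4) = cross_ratio_vec P1 P2 P3 P4"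
proof -
  have "cross_ratio_vec (a *s P1) (b *s P2) (c *s P3) (d *s P4) =
     ((c * cnj a * d * cnj b) * (herm P3 P1 * herm P4 P2)) /
     ((c * cnj a * d * cnj b) * (herm P4 P1 * herm P3 P2))"
    by (simp add: cross_ratio_vec_def algebra_simps)
  also have "\<dots> = cross_ratio_vec P1 P2 P3 P4" using assms by (simp add: cross_ratio_vec_def)
  finally show ?thesis .
qed

lemma Arg_cartan_vec_smult:
  assumes "a \<noteq> 0" "b \<noteq> 0" "c \<noteq> 0"
  shows "Arg (cartan_vec (a *s P1) (b *s P2) (c *s P3)) = Arg (cartan_vec P1 P2 P3)"
proof -
  have n: "a * cnj a = of_real ((cmod a)^2)" "b * cnj b = of_real ((cmod b)^2)"
    "c * cnj c = of_real ((cmod c)^2)"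
    by (simp_all only: complex_norm_square)
  have "cartan_vec (a *s P1) (b *s P2) (c *s P3) = (a * cnj a) * (b * cnj b) * (c * cnj c) * cartan_vec P1 P2 P3"
    by (simp add: cartan_vec_def algebra_simps)
  also have "\<dots> = of_real ((cmod a)^2 * (cmod b)^2 * (cmod c)^2) * cartan_vec P1 P2 P3"
    unfolding n by simp
  finally have "cartan_vec (a *s P1) (b *s P2) (c *s P3) =
      of_real ((cmod a)^2 * (cmod b)^2 * (cmod c)^2) * cartan_vec P1 P2 P3" .
  moreover have "(cmod a)^2 * (cmod b)^2 * (cmod c)^2 > 0" using assms by simp
  ultimately show ?thesis by (metis Arg_times_of_real)
qed

lemma cross_ratio_cline:
  "cross_ratio (cline P1) (cline P2) (cline P3) (cline P4) = cross_ratio_vec P1 P2 P3 P4"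
proof -
  obtain a b c d where "a \<noteq> 0" "b \<noteq> 0" "c \<noteq> 0" "d \<noteq> 0" and
    "lift (cline P1) = a *s P1" "lift (cline P2) = b *s P2"
    "lift (cline P3) = c *s P3" "lift (cline P4) = d *s P4"
    using lift_cline_proportional by metis
  thus ?thesis by (simp add: cross_ratio_def cross_ratio_vec_smult flip: cross_ratio_vec_def)
qed

lemma cartan_cline: "cartan (cline P1) (cline P2) (cline P3) = Arg (cartan_vec P1 P2 P3)"
proof -
  obtain a b c where "a \<noteq> 0" "b \<noteq> 0" "c \<noteq> 0" and
    "lift (cline P1) = a *s P1" "lift (cline P2) = b *s P2" "lift (cline P3) = c *s P3"
    using lift_cline_proportional by metis
  hence "cartan (cline P1) (cline P2) (cline P3) = Arg (cartan_vec (a *s P1) (b *s P2) (c *s P3))"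
    by (simp add: cartan_def cartan_vec_def)
  thus ?thesis using Arg_cartan_vec_smult \<open>a \<noteq> 0\<close> \<open>b \<noteq> 0\<close> \<open>c \<noteq> 0\<close> by simp
qed

section \<open>The group U(2,1)\<close>

lemma matrix_vector_mult_smult: "(U::complex^3^3) *v (c *s v) = c *s (U *v v)"
  by (simp add: vec_eq_iff matrix_vector_mult_def sum_distrib_left algebra_simps)

lemma act_cline: "act U (cline v) = cline (U *v v)"
proof -
  have "act U (cline v) = {U *v (c *s v) | c. c \<noteq> 0}" unfolding act_def cline_def by auto
  also have "\<dots> = cline (U *v v)" unfolding cline_def matrix_vector_mult_smult by simp
  finally show ?thesis .
qed

lemma cross_ratio_vec_unitary:
  "unitary21 U \<Longrightarrow> cross_ratio_vec (U *v P1) (U *v P2) (U *v P3) (U *v P4) = cross_ratio_vec P1 P2 P3 P4"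
  by (simp add: cross_ratio_vec_def unitary21_def)

lemma cartan_vec_unitary:
  "unitary21 U \<Longrightarrow> cartan_vec (U *v P1) (U *v P2) (U *v P3) = cartan_vec P1 P2 P3"
  by (simp add: cartan_vec_def unitary21_def)

lemma unitary21_inj: "unitary21 U \<Longrightarrow> U *v x = U *v y \<Longrightarrow> x = y"
proof -
  assume U: "unitary21 U" and e: "U *v x = U *v y"
  have "herm (x - y) W = 0" for W
  proof -
    have "herm (x - y) W = herm (U *v (x - y)) (U *v W)" using U by (simp add: unitary21_def)
    also have "\<dots> = 0" using e by (simp add: matrix_vector_mult_diff_distrib herm_def)
    finally show ?thesis .
  qed
  hence "x - y = 0" by (rule herm_nondeg)
  thus "x = y" by simp
qed

lemma unitary21_mult: "unitary21 A \<Longrightarrow> unitary21 B \<Longrightarrow> unitary21 (A ** B)"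
  by (simp add: unitary21_def matrix_vector_mul_assoc[symmetric])

lemma unitary21_mat_1: "unitary21 (mat 1)"
  by (simp add: unitary21_def)

lemma unitary21_inverse:
  assumes U: "unitary21 U" shows "\<exists>U'. unitary21 U' \<and> U' ** U = mat 1 \<and> U ** U' = mat 1"
proof -
  have "inj ((*v) U)" using unitary21_inj[OF U] by (auto simp: inj_def)
  then obtain U' where L: "U' ** U = mat 1" using matrix_left_invertible_injective by blast
  hence R: "U ** U' = mat 1" using matrix_left_right_inverse by blast
  have "unitary21 U'" unfolding unitary21_def
  proof (intro allI)
    fix Z W
    have "herm (U' *v Z) (U' *v W) = herm (U *v (U' *v Z)) (U *v (U' *v W))"
      using U by (simp add: unitary21_def)
    also have "\<dots> = herm Z W" by (simp add: matrix_vector_mul_assoc R)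
    finally show "herm (U' *v Z) (U' *v W) = herm Z W" .
  qed
  thus ?thesis using L R by blast
qed

lemma unitary21_null_vecs: "unitary21 U \<Longrightarrow> P \<in> null_vecs \<Longrightarrow> U *v P \<in> null_vecs"
proof -
  assume U: "unitary21 U" and P: "P \<in> null_vecs"
  have "U *v P \<noteq> 0"
  proof
    assume "U *v P = 0"
    hence "P = 0" using unitary21_inj[OF U, of P 0] by simp
    thus False using P by (simp add: null_vecs_def)
  qed
  thus ?thesis using U P by (simp add: null_vecs_def unitary21_def)
qed

text \<open>The vector herm-orthogonal to A and B obtained from the conjugated cross product; its
  herm-square is the Gram determinant.\<close>
definition herm_cross :: "cvec \<Rightarrow> cvec \<Rightarrow> cvec" where
  "herm_cross A B = vec3 (cnj (A$1 * B$2 - A$2 * B$1)) (cnj (A$3 * B$1 - A$1 * B$3))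
     (cnj (A$2 * B$3 - A$3 * B$2))"

lemma herm_herm_cross: "herm Z (herm_cross A B) =
    Z$1 * (A$2 * B$3 - A$3 * B$2) + Z$2 * (A$3 * B$1 - A$1 * B$3) + Z$3 * (A$1 * B$2 - A$2 * B$1)"
  by (simp add: herm_def herm_cross_def)

lemma herm_cross_self: "herm (herm_cross A B) (herm_cross A B) = herm A B * herm B A - herm A A * herm B B"
  by (simp add: herm_def herm_cross_def algebra_simps)

definition frame :: "cvec \<Rightarrow> cvec \<Rightarrow> cvec \<Rightarrow> complex^3^3" where
  "frame E1 E2 E3 = (\<chi> i j. if j = 1 then E1$i else if j = 2 then E2$i else E3$i)"

lemma frame_mult: "frame E1 E2 E3 *v Z = Z$1 *s E1 + Z$2 *s E2 + Z$3 *s E3"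
  by (simp add: vec_eq_iff frame_def matrix_vector_mult_def sum_3 algebra_simps)

lemma frame_e1: "frame E1 E2 E3 *v e1 = E1" and frame_e3: "frame E1 E2 E3 *v e3 = E3"
  by (simp_all add: frame_mult e1_def e3_def)

lemma unitary21_frame:
  assumes "herm E1 E1 = 0" "herm E3 E3 = 0" "herm E1 E3 = 1" "herm E2 E2 = 1"
    "herm E1 E2 = 0" "herm E3 E2 = 0"
  shows "unitary21 (frame E1 E2 E3)"
proof -
  have c: "herm E3 E1 = 1" "herm E2 E1 = 0" "herm E2 E3 = 0"
    using assms herm_cnj[of E3 E1] herm_cnj[of E2 E1] herm_cnj[of E2 E3] by simp_all
  show ?thesis unfolding unitary21_def frame_mult
    by (simp add: herm_add_left herm_add_right assms c) (simp add: herm_def)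
qed

lemma unitary21_standard_pair:
  assumes "P \<in> null_vecs" "Q \<in> null_vecs" "herm P Q = 1"
  shows "\<exists>U. unitary21 U \<and> U *v P = e1 \<and> U *v Q = e3"
proof -
  define E2 where "E2 = herm_cross P Q"
  have PQ: "herm P P = 0" "herm Q Q = 0" "herm Q P = 1"
    using assms herm_cnj[of Q P] by (auto simp: null_vecs_def)
  have "herm E2 E2 = 1" unfolding E2_def herm_cross_self using assms(3) PQ by simp
  moreover have "herm P E2 = 0" "herm Q E2 = 0"
    unfolding E2_def herm_herm_cross by (simp_all add: algebra_simps)
  ultimately have "unitary21 (frame P E2 Q)"
    using assms(3) PQ by (intro unitary21_frame)
  then obtain U where U: "unitary21 U" "U ** frame P E2 Q = mat 1"
    using unitary21_inverse by blast
  have "U *v P = U *v (frame P E2 Q *v e1)" "U *v Q = U *v (frame P E2 Q *v e3)"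
    by (simp_all add: frame_e1 frame_e3)
  hence "U *v P = e1" "U *v Q = e3" by (simp_all add: matrix_vector_mul_assoc U(2))
  thus ?thesis using U(1) by blast
qed

lemma unitary21_coordinates:
  assumes "unitary21 U" "U *v E1 = e1" "U *v E3 = e3"
  shows "(U *v P)$1 = herm P E3" "(U *v P)$3 = herm P E1"
  using assms by (metis herm_e1 herm_e3 unitary21_def)+

definition diag3 :: "complex \<Rightarrow> complex \<Rightarrow> complex \<Rightarrow> complex^3^3" where
  "diag3 a b c = (\<chi> i j. if i = j then vec3 a b c $ i else 0)"

lemma diag3_mult: "diag3 a b c *v Z = vec3 (a * Z$1) (b * Z$2) (c * Z$3)"
  by (simp add: vec_eq_iff forall_3 diag3_def matrix_vector_mult_def sum_3)

lemma unitary21_diag3_rotation: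
  assumes "cmod c = 1" shows "unitary21 (diag3 1 c 1)"
  unfolding unitary21_def
proof (intro allI)
  fix Z W :: cvec
  have "herm (diag3 1 c 1 *v Z) (diag3 1 c 1 *v W) =
      Z$1 * cnj (W$3) + (c * cnj c) * (Z$2 * cnj (W$2)) + Z$3 * cnj (W$1)"
    by (simp add: herm_def diag3_mult mult_ac)
  thus "herm (diag3 1 c 1 *v Z) (diag3 1 c 1 *v W) = herm Z W"
    using norm_eq_1_mult_cnj[OF assms] by (simp add: herm_def)
qed

definition lines4 :: "cvec \<times> cvec \<times> cvec \<times> cvec \<Rightarrow> quad" where
  "lines4 v = (case v of (a, b, c, d) \<Rightarrow> (cline a, cline b, cline c, cline d))"

definition map4 :: "complex^3^3 \<Rightarrow> cvec \<times> cvec \<times> cvec \<times> cvec \<Rightarrow> cvec \<times> cvec \<times> cvec \<times> cvec" where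
  "map4 U v = (case v of (a, b, c, d) \<Rightarrow> (U *v a, U *v b, U *v c, U *v d))"

definition tau4 :: "quad \<Rightarrow> complex \<times> complex \<times> real" where
  "tau4 q = (case q of (p1, p2, p3, p4) \<Rightarrow>
      (cross_ratio p1 p2 p3 p4, cross_ratio p1 p3 p2 p4, cartan p1 p2 p3))"

definition invariants4 :: "cvec \<times> cvec \<times> cvec \<times> cvec \<Rightarrow> complex \<times> complex \<times> real" where
  "invariants4 v = (case v of (a, b, c, d) \<Rightarrow>
      (cross_ratio_vec a b c d, cross_ratio_vec a c b d, Arg (cartan_vec a b c)))"

definition null4 :: "(cvec \<times> cvec \<times> cvec \<times> cvec) set" where
  "null4 = null_vecs \<times> null_vecs \<times> null_vecs \<times> null_vecs"

definition generic4 :: "(cvec \<times> cvec \<times> cvec \<times> cvec) set" where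
  "generic4 = {(a, b, c, d). a \<in> null_vecs \<and> b \<in> null_vecs \<and> c \<in> null_vecs \<and> d \<in> null_vecs \<and>
     herm a b \<noteq> 0 \<and> herm a c \<noteq> 0 \<and> herm a d \<noteq> 0 \<and> herm b c \<noteq> 0 \<and> herm b d \<noteq> 0 \<and> herm c d \<noteq> 0}"

lemma generic4_subset_null4: "generic4 \<subseteq> null4"
  by (auto simp: generic4_def null4_def)

lemma tau4_lines4: "tau4 (lines4 v) = invariants4 v"
  by (cases v) (simp add: tau4_def lines4_def invariants4_def cross_ratio_cline cartan_cline)

lemma lines4_in_quads_iff:
  assumes n: "a \<in> null_vecs" "b \<in> null_vecs" "c \<in> null_vecs" "d \<in> null_vecs"
  shows "lines4 (a, b, c, d) \<in> quads \<longleftrightarrow> (a, b, c, d) \<in> generic4"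
  using n cline_eq_iff_herm_eq_0[OF n(1) n(2)] cline_eq_iff_herm_eq_0[OF n(1) n(3)]
    cline_eq_iff_herm_eq_0[OF n(1) n(4)] cline_eq_iff_herm_eq_0[OF n(2) n(3)]
    cline_eq_iff_herm_eq_0[OF n(2) n(4)] cline_eq_iff_herm_eq_0[OF n(3) n(4)]
  by (auto simp: generic4_def quads_def lines4_def bdry_def)

lemma quads_iff_lines4: "q \<in> quads \<longleftrightarrow> (\<exists>v \<in> generic4. q = lines4 v)"
proof
  assume q: "q \<in> quads"
  then obtain a b c d where "a \<in> null_vecs" "b \<in> null_vecs" "c \<in> null_vecs" "d \<in> null_vecs"
    and "q = lines4 (a, b, c, d)"
    unfolding quads_def lines4_def in_bdry_iff by auto
  with q show "\<exists>v \<in> generic4. q = lines4 v"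
    using lines4_in_quads_iff by blast
next
  assume "\<exists>v \<in> generic4. q = lines4 v"
  then show "q \<in> quads"
    using lines4_in_quads_iff by (auto simp: generic4_def)
qed

lemma generic4_smult_iff:
  assumes "a \<noteq> 0" "b \<noteq> 0" "c \<noteq> 0" "d \<noteq> 0"
  shows "(a *s P1, b *s P2, c *s P3, d *s P4) \<in> generic4 \<longleftrightarrow> (P1, P2, P3, P4) \<in> generic4"
  using assms by (simp add: generic4_def smult_in_null_vecs_iff)

lemma lines4_smult:
  assumes "a \<noteq> 0" "b \<noteq> 0" "c \<noteq> 0" "d \<noteq> 0"
  shows "lines4 (a *s P1, b *s P2, c *s P3, d *s P4) = lines4 (P1, P2, P3, P4)"
  using assms by (simp add: lines4_def cline_smult)

lemma map4_generic4: "unitary21 U \<Longrightarrow> v \<in> generic4 \<Longrightarrow> map4 U v \<in> generic4"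
  by (cases v) (auto simp: generic4_def map4_def unitary21_null_vecs unitary21_def)

lemma act4_lines4: "act4 U (lines4 v) = lines4 (map4 U v)"
  by (cases v) (simp add: act4_def lines4_def map4_def act_cline)

lemma invariants4_map4: "unitary21 U \<Longrightarrow> invariants4 (map4 U v) = invariants4 v"
  by (cases v) (simp add: invariants4_def map4_def cross_ratio_vec_unitary cartan_vec_unitary)

lemma tau4_act4: "unitary21 U \<Longrightarrow> q \<in> quads \<Longrightarrow> tau4 (act4 U q) = tau4 q"
  using quads_iff_lines4 act4_lines4 tau4_lines4 invariants4_map4 by metis

lemma act4_id: "act4 (mat 1) q = q"
  by (cases q) (simp add: act4_def act_def)

lemma act4_mult: "act4 (A ** B) q = act4 A (act4 B q)"
  by (cases q) (simp add: act4_def act_def image_image matrix_vector_mul_assoc[symmetric])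

definition congruent4 :: "quad \<Rightarrow> quad \<Rightarrow> bool" where
  "congruent4 q q' \<longleftrightarrow> (\<exists>U. unitary21 U \<and> q' = act4 U q)"

lemma congruent4_refl: "congruent4 q q"
  unfolding congruent4_def using unitary21_mat_1 act4_id by metis

lemma congruent4_sym: "congruent4 q q' \<Longrightarrow> congruent4 q' q"
  unfolding congruent4_def using unitary21_inverse act4_mult act4_id by metis

lemma congruent4_trans: "congruent4 q q' \<Longrightarrow> congruent4 q' q'' \<Longrightarrow> congruent4 q q''"
  unfolding congruent4_def using unitary21_mult act4_mult by metis

lemma map4_smult_generic4:
  assumes U: "unitary21 U" and v: "v \<in> generic4"
    and Uv: "map4 U v = (a *s P1, b *s P2, c *s P3, d *s P4)"
    and nz: "a \<noteq> 0" "b \<noteq> 0" "c \<noteq> 0" "d \<noteq> 0"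
  shows "(P1, P2, P3, P4) \<in> generic4 \<and> congruent4 (lines4 v) (lines4 (P1, P2, P3, P4))"
proof
  show "(P1, P2, P3, P4) \<in> generic4"
    using map4_generic4[OF U v] generic4_smult_iff[OF nz] by (simp add: Uv)
  have "act4 U (lines4 v) = lines4 (P1, P2, P3, P4)"
    using lines4_smult[OF nz] by (simp add: act4_lines4 Uv)
  thus "congruent4 (lines4 v) (lines4 (P1, P2, P3, P4))" using U unfolding congruent4_def by metis
qed

lemma tau4_congruent4: "congruent4 q q' \<Longrightarrow> q \<in> quads \<Longrightarrow> tau4 q' = tau4 q"
  unfolding congruent4_def using tau4_act4 by blast

lemma orbit4_eq_if_congruent4: "congruent4 q q' \<Longrightarrow> orbit4 q = orbit4 q'"
  unfolding orbit4_def congruent4_def[symmetric] using congruent4_sym congruent4_trans by blast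

lemma in_orbit4_self: "q \<in> orbit4 q"
  unfolding orbit4_def congruent4_def[symmetric] using congruent4_refl by simp

lemma tau_orbit4: assumes "q \<in> quads" shows "tau (orbit4 q) = tau4 q"
proof -
  have "(SOME x. x \<in> orbit4 q) \<in> orbit4 q" using in_orbit4_self by (rule someI)
  hence "tau4 (SOME x. x \<in> orbit4 q) = tau4 q"
    using tau4_congruent4 assms unfolding orbit4_def congruent4_def[symmetric] by blast
  thus ?thesis by (simp add: tau_def tau4_def)
qed

section \<open>Normal forms\<close>

definition normal_form4 :: "complex \<Rightarrow> complex \<Rightarrow> complex \<Rightarrow> complex \<Rightarrow> cvec \<times> cvec \<times> cvec \<times> cvec" where
  "normal_form4 w3 z3 w4 z4 = (e1, e3, vec3 w3 z3 1, vec3 w4 z4 1)"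

lemma invariants4_normal_form4:
  "invariants4 (normal_form4 w3 z3 w4 z4) =
     (w4 / w3, herm (vec3 w4 z4 1) (vec3 w3 z3 1) / cnj w3, Arg (- cnj w3))"
  by (simp add: normal_form4_def invariants4_def cross_ratio_vec_def cartan_vec_def herm_def
      e1_def e3_def)

text \<open>U sends t P1 to e1 and s P2 to e3; replacing t by a real multiple k t divides w3 by
  k^2, which is how t is chosen to make |w3| = 1.\<close>
lemma normal_form:
  assumes v: "(P1, P2, P3, P4) \<in> generic4"
  shows "\<exists>w3 z3 w4 z4. cmod w3 = 1 \<and> normal_form4 w3 z3 w4 z4 \<in> generic4 \<and>
           congruent4 (lines4 (P1, P2, P3, P4)) (lines4 (normal_form4 w3 z3 w4 z4))"
proof -
  have n: "P1 \<in> null_vecs" "P2 \<in> null_vecs"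
    and h: "herm P1 P2 \<noteq> 0" "herm P3 P1 \<noteq> 0" "herm P4 P1 \<noteq> 0" "herm P3 P2 \<noteq> 0"
    using v by (auto simp: generic4_def herm_eq_0_commute)
  define r where "r = cmod (herm P3 P2 / (herm P1 P2 * herm P3 P1))"
  define t where "t = complex_of_real (sqrt r)"
  define s where "s = 1 / (t * cnj (herm P1 P2))"
  have "r > 0" using h by (simp add: r_def)
  hence t0: "t \<noteq> 0" and cnj_t: "cnj t = t" and tt: "cmod (t * t) = r"
    by (simp_all add: t_def norm_mult)
  have s0: "s \<noteq> 0" and cnj_s: "cnj s = 1 / (t * herm P1 P2)"
    using t0 h cnj_t by (simp_all add: s_def)
  have "herm (t *s P1) (s *s P2) = 1" using t0 h by (simp add: cnj_s cnj_t)
  moreover have "t *s P1 \<in> null_vecs" "s *s P2 \<in> null_vecs"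
    using n t0 s0 by (simp_all add: smult_in_null_vecs_iff)
  ultimately obtain U where U: "unitary21 U" "U *v (t *s P1) = e1" "U *v (s *s P2) = e3"
    using unitary21_standard_pair by blast
  define Q3 where "Q3 = U *v P3"
  define Q4 where "Q4 = U *v P4"
  define w3 where "w3 = Q3$1 / Q3$3"
  define w4 where "w4 = Q4$1 / Q4$3"
  define z3 where "z3 = Q3$2 / Q3$3"
  define z4 where "z4 = Q4$2 / Q4$3"
  have Q: "Q3$1 = cnj s * herm P3 P2" "Q3$3 = t * herm P3 P1" "Q4$3 = t * herm P4 P1"
    using unitary21_coordinates[OF U] cnj_t by (simp_all add: Q3_def Q4_def)
  have Q0: "Q3$3 \<noteq> 0" "Q4$3 \<noteq> 0" using Q t0 h by simp_all
  have "cmod w3 = cmod (herm P3 P2 / (herm P1 P2 * herm P3 P1)) / cmod (t * t)"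
    using t0 by (simp add: w3_def Q cnj_s norm_divide norm_mult)
  hence w3: "cmod w3 = 1" using tt \<open>r > 0\<close> by (simp add: r_def)
  have "U *v P1 = (1 / t) *s (U *v (t *s P1))" "U *v P2 = (1 / s) *s (U *v (s *s P2))"
    using t0 s0 by (simp_all add: matrix_vector_mult_smult vector_smult_assoc)
  hence UP: "map4 U (P1, P2, P3, P4) =
      ((1 / t) *s e1, (1 / s) *s e3, Q3$3 *s vec3 w3 z3 1, Q4$3 *s vec3 w4 z4 1)"
    using U(2,3) vec3_coordinates[OF Q0(1)] vec3_coordinates[OF Q0(2)]
    by (simp add: map4_def w3_def w4_def z3_def z4_def flip: Q3_def Q4_def)
  have "1 / t \<noteq> 0" "1 / s \<noteq> 0" using t0 s0 by simp_all
  from map4_smult_generic4[OF U(1) v UP this Q0] w3 show ?thesis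
    unfolding normal_form4_def by blast
qed

text \<open>In a normal form over (X1, X2, A) the product z4 * cnj z3 equals this function of the
  invariants.\<close>
definition z4_cnj_z3 :: "complex \<times> complex \<times> real \<Rightarrow> complex" where
  "z4_cnj_z3 = (\<lambda>(X1, X2, A). (1 - X2) * exp (\<i> * of_real A) + X1 * exp (- \<i> * of_real A))"

lemma of_real_Mset_lhs:
  "complex_of_real (- 2 * Re (X1 + X2) - 2 * Re (X1 * cnj X2 * g) + (cmod X1)^2 + (cmod X2)^2 + 1)
   = -(X1 + cnj X1) - (X2 + cnj X2) - (X1 * cnj X2 * g + cnj X1 * X2 * cnj g)
     + X1 * cnj X1 + X2 * cnj X2 + 1"
  unfolding cmod_power2 by (simp add: complex_eq_iff power2_eq_square algebra_simps)

lemma Mset_lhs_eq: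
  "- 2 * Re (X1 + X2) - 2 * Re (X1 * cnj X2 * exp (- 2 * \<i> * of_real A)) + (cmod X1)^2 + (cmod X2)^2 + 1
   = (cmod (z4_cnj_z3 (X1, X2, A)))^2 - 2 * cos A * (2 * Re (X1 * exp (- \<i> * of_real A)))"
proof -
  define e where "e = exp (\<i> * of_real A)"
  define c where "c = exp (- \<i> * of_real A)"
  have ec: "cnj e = c" "cnj c = e" "e * c = 1" "e + c = of_real (2 * cos A)"
    using exp_i_of_real[of A] by (simp_all add: e_def c_def)
  have K: "z4_cnj_z3 (X1, X2, A) = (1 - X2) * e + X1 * c" by (simp add: z4_cnj_z3_def e_def c_def)
  have re: "of_real (2 * Re (X1 * c)) = X1 * c + cnj X1 * e"
    using complex_add_cnj[of "X1 * c"] ec by simp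
  have lhs: "complex_of_real (- 2 * Re (X1 + X2) - 2 * Re (X1 * cnj X2 * c^2) + (cmod X1)^2 + (cmod X2)^2 + 1)
     = -(X1 + cnj X1) - (X2 + cnj X2) - (X1 * cnj X2 * c^2 + cnj X1 * X2 * e^2) + X1 * cnj X1 + X2 * cnj X2 + 1"
    using of_real_Mset_lhs[of X1 X2 "c^2"] ec(2) by simp
  have "complex_of_real ((cmod (z4_cnj_z3 (X1, X2, A)))^2 - 2 * cos A * (2 * Re (X1 * c)))
     = complex_of_real ((cmod (z4_cnj_z3 (X1, X2, A)))^2)
       - complex_of_real (2 * cos A) * complex_of_real (2 * Re (X1 * c))"
    by simp
  also have "\<dots> = ((1 - X2) * e + X1 * c) * ((1 - cnj X2) * c + cnj X1 * e) - (e + c) * (X1 * c + cnj X1 * e)"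
    unfolding K complex_norm_square re ec(4)[symmetric] using ec by simp
  finally have rhs: "complex_of_real ((cmod (z4_cnj_z3 (X1, X2, A)))^2 - 2 * cos A * (2 * Re (X1 * c)))
     = ((1 - X2) * e + X1 * c) * ((1 - cnj X2) * c + cnj X1 * e) - (e + c) * (X1 * c + cnj X1 * e)" .
  have "complex_of_real (- 2 * Re (X1 + X2) - 2 * Re (X1 * cnj X2 * c^2) + (cmod X1)^2 + (cmod X2)^2 + 1)
     = complex_of_real ((cmod (z4_cnj_z3 (X1, X2, A)))^2 - 2 * cos A * (2 * Re (X1 * c)))"
    unfolding lhs rhs using ec(3) by algebra
  thus ?thesis unfolding exp_i_of_real(5) c_def of_real_eq_iff .
qed

lemma in_Mset_iff: "(X1, X2, A) \<in> Mset \<longleftrightarrow>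
    X1 \<noteq> 0 \<and> X2 \<noteq> 0 \<and> - pi / 2 \<le> A \<and> A \<le> pi / 2 \<and> Re (X1 * exp (- \<i> * of_real A)) \<ge> 0 \<and>
    (cmod (z4_cnj_z3 (X1, X2, A)))^2 = 2 * cos A * (2 * Re (X1 * exp (- \<i> * of_real A)))"
  unfolding Mset_def Mset_lhs_eq by auto

lemma normal_form_coordinates:
  assumes w3: "cmod w3 = 1"
    and n: "vec3 w3 z3 1 \<in> null_vecs" "vec3 w4 z4 1 \<in> null_vecs"
    and m: "invariants4 (normal_form4 w3 z3 w4 z4) = (X1, X2, A)"
  shows "w3 = - exp (- \<i> * of_real A)" "w4 = - X1 * exp (- \<i> * of_real A)"
    "(cmod z3)^2 = 2 * cos A" "(cmod z4)^2 = 2 * Re (X1 * exp (- \<i> * of_real A))"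
    "z4 * cnj z3 = z4_cnj_z3 (X1, X2, A)" "- pi < A" "A \<le> pi"
proof -
  have X: "X1 = w4 / w3" "X2 = herm (vec3 w4 z4 1) (vec3 w3 z3 1) / cnj w3" "A = Arg (- cnj w3)"
    using m by (simp_all add: invariants4_normal_form4)
  show "- pi < A" "A \<le> pi" using X(3) mpi_less_Arg Arg_le_pi by auto
  define e where "e = exp (\<i> * of_real A)"
  define c where "c = exp (- \<i> * of_real A)"
  have ec: "cnj e = c" "cnj c = e" "e * c = 1" "e + c = of_real (2 * cos A)"
    using exp_i_of_real[of A] by (simp_all add: e_def c_def)
  have w30: "w3 \<noteq> 0" using w3 by auto
  have "- cnj w3 = e" using Arg_eq[of "- cnj w3"] w3 w30 by (simp add: X(3) e_def)
  hence w3c: "w3 = - c" using ec(1) by (metis complex_cnj_cnj complex_cnj_minus minus_minus)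
  thus "w3 = - exp (- \<i> * of_real A)" by (simp add: c_def)
  have w4c: "w4 = - X1 * c" using w30 by (simp add: X(1) w3c)
  thus "w4 = - X1 * exp (- \<i> * of_real A)" by (simp add: c_def)
  have n3: "w3 + cnj w3 + z3 * cnj z3 = 0" and n4: "w4 + cnj w4 + z4 * cnj z4 = 0"
    using n by (simp_all add: vec3_null_iff)
  have "complex_of_real ((cmod z3)^2) = complex_of_real (2 * cos A)"
    unfolding complex_norm_square ec(4)[symmetric] using n3 ec(2) by (simp add: w3c add_eq_0_iff)
  thus "(cmod z3)^2 = 2 * cos A" by (simp only: of_real_eq_iff)
  have "complex_of_real ((cmod z4)^2) = complex_of_real (2 * Re (X1 * c))"
    unfolding complex_norm_square complex_add_cnj[symmetric] using n4 ec(2)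
    by (simp add: w4c add_eq_0_iff)
  thus "(cmod z4)^2 = 2 * Re (X1 * exp (- \<i> * of_real A))" by (simp only: of_real_eq_iff c_def)
  have "e \<noteq> 0" using ec(3) by auto
  hence "X2 * e = - (w4 + z4 * cnj z3 - e)"
    using X(2) w30 ec w3c by (simp add: herm_vec3 field_simps)
  moreover have "z4_cnj_z3 (X1, X2, A) = (1 - X2) * e + X1 * c"
    by (simp add: z4_cnj_z3_def e_def c_def)
  ultimately show "z4 * cnj z3 = z4_cnj_z3 (X1, X2, A)" by (simp add: w4c algebra_simps) algebra
qed

lemma normal_form_in_Mset:
  assumes g: "normal_form4 w3 z3 w4 z4 \<in> generic4" and w3: "cmod w3 = 1"
  shows "invariants4 (normal_form4 w3 z3 w4 z4) \<in> Mset"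
proof -
  obtain X1 X2 A where m: "invariants4 (normal_form4 w3 z3 w4 z4) = (X1, X2, A)"
    by (metis prod_cases3)
  have n: "vec3 w3 z3 1 \<in> null_vecs" "vec3 w4 z4 1 \<in> null_vecs"
    and h: "herm e3 (vec3 w4 z4 1) \<noteq> 0" "herm (vec3 w3 z3 1) (vec3 w4 z4 1) \<noteq> 0"
    using g by (simp_all add: generic4_def normal_form4_def)
  note C = normal_form_coordinates[OF w3 n m]
  have "w4 \<noteq> 0" using h(1) by (simp add: herm_def e3_def)
  hence "X1 \<noteq> 0" using C(2) by auto
  moreover have "X2 \<noteq> 0"
    using h(2) herm_eq_0_commute m w3 by (auto simp: invariants4_normal_form4)
  moreover have "- pi / 2 \<le> A \<and> A \<le> pi / 2"
    using cos_nonneg_imp_abs_le_pi_half C(3,6,7) zero_le_power2[of "cmod z3"] by simp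
  moreover have "Re (X1 * exp (- \<i> * of_real A)) \<ge> 0"
    using C(4) zero_le_power2[of "cmod z4"] by simp
  moreover have "(cmod (z4_cnj_z3 (X1, X2, A)))^2 = 2 * cos A * (2 * Re (X1 * exp (- \<i> * of_real A)))"
    by (simp add: C(5)[symmetric] norm_mult power_mult_distrib C(3,4))
  ultimately show ?thesis unfolding m in_Mset_iff by blast
qed

lemma invariants4_in_Mset:
  assumes "v \<in> generic4" shows "invariants4 v \<in> Mset"
proof -
  obtain P1 P2 P3 P4 where v: "v = (P1, P2, P3, P4)" by (cases v)
  then obtain w3 z3 w4 z4 where nf: "cmod w3 = 1" "normal_form4 w3 z3 w4 z4 \<in> generic4"
    and cong: "congruent4 (lines4 v) (lines4 (normal_form4 w3 z3 w4 z4))"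
    using normal_form assms by blast
  have "lines4 v \<in> quads" using assms quads_iff_lines4 by blast
  hence "invariants4 v = invariants4 (normal_form4 w3 z3 w4 z4)"
    using tau4_congruent4[OF cong] by (simp add: tau4_lines4)
  thus ?thesis using normal_form_in_Mset[OF nf(2,1)] by simp
qed

lemma tau4_in_Mset: "q \<in> quads \<Longrightarrow> tau4 q \<in> Mset"
  using quads_iff_lines4 tau4_lines4 invariants4_in_Mset by metis

section \<open>Normal forms parametrised by M \<times> S1 \<times> S1\<close>

definition norm_z3 :: "complex \<times> complex \<times> real \<Rightarrow> real" where
  "norm_z3 = (\<lambda>(X1, X2, A). sqrt (2 * cos A))"

definition norm_z4 :: "complex \<times> complex \<times> real \<Rightarrow> real" where
  "norm_z4 = (\<lambda>(X1, X2, A). sqrt (2 * Re (X1 * exp (- \<i> * of_real A))))"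

definition normal_lift :: "(complex \<times> complex \<times> real) \<times> complex \<times> complex \<Rightarrow> cvec \<times> cvec \<times> cvec \<times> cvec" where
  "normal_lift = (\<lambda>((X1, X2, A), u, v).
     normal_form4 (- exp (- \<i> * of_real A)) (of_real (norm_z3 (X1, X2, A)) * u)
       (- X1 * exp (- \<i> * of_real A)) (of_real (norm_z4 (X1, X2, A)) * v))"

definition lift_params :: "((complex \<times> complex \<times> real) \<times> complex \<times> complex) set" where
  "lift_params = {(m, u, v). m \<in> Mset \<and> cmod u = 1 \<and> cmod v = 1 \<and>
     of_real (norm_z4 m) * v * cnj (of_real (norm_z3 m) * u) = z4_cnj_z3 m}"

lemma power2_norm_z3_z4:
  assumes "(X1, X2, A) \<in> Mset"
  shows "(norm_z3 (X1, X2, A))^2 = 2 * cos A"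
    "(norm_z4 (X1, X2, A))^2 = 2 * Re (X1 * exp (- \<i> * of_real A))"
  using assms cos_ge_zero[of A] by (simp_all add: in_Mset_iff norm_z3_def norm_z4_def)

lemma normal_lift_props:
  assumes t: "t \<in> lift_params"
  shows "normal_lift t \<in> generic4" "invariants4 (normal_lift t) = fst t"
proof -
  obtain X1 X2 A u v where tt: "t = ((X1, X2, A), u, v)" by (metis prod.exhaust)
  have M: "(X1, X2, A) \<in> Mset" and u: "cmod u = 1" and v: "cmod v = 1"
    and K: "of_real (norm_z4 (X1, X2, A)) * v * cnj (of_real (norm_z3 (X1, X2, A)) * u)
            = z4_cnj_z3 (X1, X2, A)"
    using t by (auto simp: lift_params_def tt)
  have P: "X1 \<noteq> 0" "X2 \<noteq> 0" "- pi / 2 \<le> A" "A \<le> pi / 2"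
    using M by (simp_all add: in_Mset_iff)
  note S = power2_norm_z3_z4[OF M]
  define e where "e = exp (\<i> * of_real A)"
  define c where "c = exp (- \<i> * of_real A)"
  have ec: "cnj e = c" "cnj c = e" "e * c = 1" "e + c = of_real (2 * cos A)"
    using exp_i_of_real[of A] by (simp_all add: e_def c_def)
  have c0: "c \<noteq> 0" and e0: "e \<noteq> 0" using ec(3) by auto
  define z3 where "z3 = of_real (norm_z3 (X1, X2, A)) * u"
  define z4 where "z4 = of_real (norm_z4 (X1, X2, A)) * v"
  have "z3 * cnj z3 = e + c"
    unfolding z3_def mult_cnj_of_real_times_unit[OF u] S(1) ec(4) ..
  hence n3: "vec3 (- c) z3 1 \<in> null_vecs" using ec(2) by (simp add: vec3_null_iff)
  have "z4 * cnj z4 = X1 * c + cnj (X1 * c)"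
    unfolding z4_def mult_cnj_of_real_times_unit[OF v] S(2) complex_add_cnj c_def ..
  hence n4: "vec3 (- X1 * c) z4 1 \<in> null_vecs" by (simp add: vec3_null_iff)
  have h43: "herm (vec3 (- X1 * c) z4 1) (vec3 (- c) z3 1) = - X2 * e"
    using K ec(2) by (simp add: herm_vec3 z3_def z4_def z4_cnj_z3_def e_def c_def algebra_simps)
  have nl: "normal_lift t = normal_form4 (- c) z3 (- X1 * c) z4"
    by (simp add: normal_lift_def tt z3_def z4_def c_def)
  show "normal_lift t \<in> generic4"
    unfolding nl normal_form4_def generic4_def using n3 n4 h43 e1_null e3_null P(1,2) c0 e0
    by (simp add: herm_eq_0_commute[of "vec3 (- c) z3 1"]) (simp add: herm_def e1_def e3_def)
  have "- pi < A" "A \<le> pi" using P(3,4) pi_gt_zero by linarith+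
  hence "Arg e = A" unfolding e_def by (subst Arg_exp) simp_all
  thus "invariants4 (normal_lift t) = fst t"
    unfolding nl invariants4_normal_form4 h43 using c0 e0 ec(2) by (simp add: tt)
qed

lemma lift_params_fiber_nonempty:
  assumes M: "m \<in> Mset" shows "\<exists>u v. (m, u, v) \<in> lift_params"
proof -
  obtain X1 X2 A where mm: "m = (X1, X2, A)" by (metis prod_cases3)
  have M': "(X1, X2, A) \<in> Mset" using M by (simp add: mm)
  have "(cmod (z4_cnj_z3 m))^2 = 2 * cos A * (2 * Re (X1 * exp (- \<i> * of_real A)))"
    using M' unfolding mm in_Mset_iff by blast
  also have "\<dots> = (norm_z4 m * norm_z3 m)^2"
    unfolding mm power_mult_distrib power2_norm_z3_z4[OF M'] by simp
  finally have "(cmod (z4_cnj_z3 m))^2 = (norm_z4 m * norm_z3 m)^2" .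
  moreover have "0 \<le> norm_z4 m * norm_z3 m"
    using M' cos_ge_zero[of A] by (simp add: mm norm_z3_def norm_z4_def in_Mset_iff)
  ultimately have "cmod (z4_cnj_z3 m) = norm_z4 m * norm_z3 m"
    using power2_eq_iff_nonneg norm_ge_zero by blast
  moreover obtain v where "cmod v = 1" "of_real (cmod (z4_cnj_z3 m)) * v = z4_cnj_z3 m"
    using exists_unit_polar by blast
  ultimately have "(m, 1, v) \<in> lift_params" using M by (simp add: lift_params_def mult_ac)
  thus ?thesis by blast
qed

lemma normal_lift_fiber_congruent4:
  assumes t: "(m, u, v) \<in> lift_params" and t': "(m, u', v') \<in> lift_params"
  shows "congruent4 (lines4 (normal_lift (m, u, v))) (lines4 (normal_lift (m, u', v')))"
proof -
  obtain X1 X2 A where mm: "m = (X1, X2, A)" by (metis prod_cases3)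
  have "cmod u = 1" "cmod u' = 1" "cmod v = 1" "cmod v' = 1"
    and "of_real (norm_z4 m) * v * cnj (of_real (norm_z3 m) * u)
       = of_real (norm_z4 m) * v' * cnj (of_real (norm_z3 m) * u')"
    using t t' by (auto simp: lift_params_def)
  then obtain c where c: "cmod c = 1" "of_real (norm_z3 m) * u' = c * (of_real (norm_z3 m) * u)"
     "of_real (norm_z4 m) * v' = c * (of_real (norm_z4 m) * v)"
    using common_unit_rotation by metis
  have "map4 (diag3 1 c 1) (normal_lift (m, u, v)) = normal_lift (m, u', v')"
    by (simp add: mm normal_lift_def normal_form4_def map4_def diag3_mult e1_def e3_def
        flip: c(2,3)[unfolded mm])
  hence "act4 (diag3 1 c 1) (lines4 (normal_lift (m, u, v))) = lines4 (normal_lift (m, u', v'))"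
    by (simp add: act4_lines4)
  thus ?thesis using unitary21_diag3_rotation[OF c(1)] unfolding congruent4_def by metis
qed

lemma quads_congruent_normal_lift:
  assumes "q \<in> quads"
  shows "\<exists>t \<in> lift_params. congruent4 q (lines4 (normal_lift t))"
proof -
  obtain P1 P2 P3 P4 where v: "(P1, P2, P3, P4) \<in> generic4" "q = lines4 (P1, P2, P3, P4)"
    using assms quads_iff_lines4 by (metis prod_cases4)
  then obtain w3 z3 w4 z4 where w3: "cmod w3 = 1" and g: "normal_form4 w3 z3 w4 z4 \<in> generic4"
    and cong: "congruent4 q (lines4 (normal_form4 w3 z3 w4 z4))"
    using normal_form by blast
  obtain X1 X2 A where m: "invariants4 (normal_form4 w3 z3 w4 z4) = (X1, X2, A)"
    by (metis prod_cases3)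
  have "vec3 w3 z3 1 \<in> null_vecs" "vec3 w4 z4 1 \<in> null_vecs"
    using g by (simp_all add: generic4_def normal_form4_def)
  note C = normal_form_coordinates[OF w3 this m]
  have s: "norm_z3 (X1, X2, A) = cmod z3" "norm_z4 (X1, X2, A) = cmod z4"
    unfolding norm_z3_def norm_z4_def prod.case C(3,4)[symmetric] by simp_all
  obtain u where u: "cmod u = 1" "of_real (cmod z3) * u = z3" using exists_unit_polar by blast
  obtain v where v: "cmod v = 1" "of_real (cmod z4) * v = z4" using exists_unit_polar by blast
  have "(X1, X2, A) \<in> Mset" using normal_form_in_Mset[OF g w3] m by simp
  moreover have "of_real (cmod z4) * v * cnj (of_real (cmod z3) * u) = z4 * cnj z3"
    by (simp only: u(2) v(2))
  ultimately have "((X1, X2, A), u, v) \<in> lift_params"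
    using u(1) v(1) C(5) by (simp add: lift_params_def s)
  moreover have "normal_lift ((X1, X2, A), u, v) = normal_form4 w3 z3 w4 z4"
    using C(1,2) u v s by (simp add: normal_lift_def)
  ultimately show ?thesis using cong by metis
qed

section \<open>Topology\<close>

lemma istopology_quotient:
  "istopology (\<lambda>U. U \<subseteq> f ` topspace X \<and> openin X {x \<in> topspace X. f x \<in> U})"
proof -
  have "S \<inter> T \<subseteq> f ` topspace X \<and> openin X {x \<in> topspace X. f x \<in> S \<inter> T}"
    if "S \<subseteq> f ` topspace X \<and> openin X {x \<in> topspace X. f x \<in> S}"
       "T \<subseteq> f ` topspace X \<and> openin X {x \<in> topspace X. f x \<in> T}" for S T
  proof -
    have "{x \<in> topspace X. f x \<in> S \<inter> T} = {x \<in> topspace X. f x \<in> S} \<inter> {x \<in> topspace X. f x \<in> T}"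
      by auto
    thus ?thesis using that by auto
  qed
  moreover have "\<Union>K \<subseteq> f ` topspace X \<and> openin X {x \<in> topspace X. f x \<in> \<Union>K}"
    if K: "\<forall>U\<in>K. U \<subseteq> f ` topspace X \<and> openin X {x \<in> topspace X. f x \<in> U}" for K
  proof -
    have "{x \<in> topspace X. f x \<in> \<Union>K} = (\<Union>U \<in> K. {x \<in> topspace X. f x \<in> U})" by auto
    moreover have "openin X (\<Union>U \<in> K. {x \<in> topspace X. f x \<in> U})" using K by auto
    ultimately show ?thesis using K by auto
  qed
  ultimately show ?thesis unfolding istopology_def by blast
qed

lemma openin_quotient_topology:
  "openin (quotient_topology X f) U \<longleftrightarrow> U \<subseteq> f ` topspace X \<and> openin X {x \<in> topspace X. f x \<in> U}"
  by (simp only: quotient_topology_def topology_inverse'[OF istopology_quotient])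

lemma topspace_quotient_topology: "topspace (quotient_topology X f) = f ` topspace X"
proof -
  have "{x \<in> topspace X. f x \<in> f ` topspace X} = topspace X" by auto
  hence "openin (quotient_topology X f) (f ` topspace X)" by (simp add: openin_quotient_topology)
  hence "f ` topspace X \<subseteq> topspace (quotient_topology X f)" by (rule openin_subset)
  moreover have "topspace (quotient_topology X f) \<subseteq> f ` topspace X"
    using openin_quotient_topology[of X f "topspace (quotient_topology X f)"] by simp
  ultimately show ?thesis by blast
qed

lemma quotient_map_quotient_topology: "quotient_map X (quotient_topology X f) f"
  unfolding quotient_map_def topspace_quotient_topology openin_quotient_topology by auto

lemma open_map_prod_topology:
  assumes f: "open_map X X' f" and g: "open_map Y Y' g"
  shows "open_map (prod_topology X Y) (prod_topology X' Y') (\<lambda>(x, y). (f x, g y))"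
  unfolding open_map_def
proof (intro allI impI)
  fix W assume W: "openin (prod_topology X Y) W"
  show "openin (prod_topology X' Y') ((\<lambda>(x, y). (f x, g y)) ` W)"
    unfolding openin_prod_topology_alt
  proof (intro allI impI)
    fix a b assume "(a, b) \<in> (\<lambda>(x, y). (f x, g y)) ` W"
    then obtain x y where xy: "(x, y) \<in> W" "a = f x" "b = g y" by auto
    have "\<exists>U V. openin X U \<and> openin Y V \<and> x \<in> U \<and> y \<in> V \<and> U \<times> V \<subseteq> W"
      using W xy(1) unfolding openin_prod_topology_alt by simp
    then obtain U V where UV: "openin X U" "openin Y V" "x \<in> U" "y \<in> V" "U \<times> V \<subseteq> W"
      by blast
    have "openin X' (f ` U)" "openin Y' (g ` V)" using f g UV unfolding open_map_def by auto
    moreover have "f ` U \<times> g ` V \<subseteq> (\<lambda>(x, y). (f x, g y)) ` W" using UV(5) by auto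
    moreover have "a \<in> f ` U" "b \<in> g ` V" using xy UV by auto
    ultimately show "\<exists>U V. openin X' U \<and> openin Y' V \<and> a \<in> U \<and> b \<in> V \<and>
        U \<times> V \<subseteq> (\<lambda>(x, y). (f x, g y)) ` W"
      by (intro exI[of _ "f ` U"] exI[of _ "g ` V"]) simp
  qed
qed

lemma topspace_bdry_top: "topspace bdry_top = bdry"
  by (simp add: bdry_top_def topspace_quotient_topology bdry_def)

lemma topspace_quads_top: "topspace quads_top = quads"
  by (auto simp: quads_top_def topspace_bdry_top quads_def)

lemma topspace_config_top: "topspace config_top = orbit4 ` quads"
  by (simp add: config_top_def topspace_quotient_topology topspace_quads_top)

lemma quotient_map_orbit4: "quotient_map quads_top config_top orbit4"
  unfolding config_top_def by (rule quotient_map_quotient_topology)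

lemma continuous_on_smult: "continuous_on S (\<lambda>x::cvec. c *s x)"
  unfolding vector_scalar_mult_def by (intro continuous_intros)

lemma open_map_cline: "open_map (top_of_set null_vecs) bdry_top cline"
  unfolding open_map_def
proof (intro allI impI)
  fix W assume W: "openin (top_of_set null_vecs) W"
  then obtain G where G: "open G" "W = null_vecs \<inter> G" by (auto simp: openin_open)
  have Wn: "W \<subseteq> null_vecs" using G by auto
  have eq: "{x \<in> topspace (top_of_set null_vecs). cline x \<in> cline ` W} =
     (\<Union>c \<in> {c. c \<noteq> 0}. null_vecs \<inter> (\<lambda>x. c *s x) -` G)"
  proof (intro set_eqI iffI)
    fix x assume "x \<in> {x \<in> topspace (top_of_set null_vecs). cline x \<in> cline ` W}"
    then obtain w where x: "x \<in> null_vecs" "w \<in> W" "cline x = cline w" by auto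
    then obtain c where c: "c \<noteq> 0" "x = c *s w" using cline_eq_iff by blast
    hence "(1 / c) *s x = w" by (simp add: vector_smult_assoc)
    moreover have "1 / c \<noteq> 0" using c by simp
    ultimately show "x \<in> (\<Union>c \<in> {c. c \<noteq> 0}. null_vecs \<inter> (\<lambda>x. c *s x) -` G)" using x G
      by (intro UN_I[of "1 / c"]) auto
  next
    fix x assume "x \<in> (\<Union>c \<in> {c. c \<noteq> 0}. null_vecs \<inter> (\<lambda>x. c *s x) -` G)"
    then obtain c where c: "c \<noteq> 0" "x \<in> null_vecs" "c *s x \<in> G" by auto
    hence w: "c *s x \<in> W" using G smult_in_null_vecs_iff by auto
    have "cline x = cline (c *s x)" using c cline_smult by simp
    thus "x \<in> {x \<in> topspace (top_of_set null_vecs). cline x \<in> cline ` W}" using w c by auto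
  qed
  have "openin (top_of_set null_vecs) (\<Union>c \<in> {c. c \<noteq> 0}. null_vecs \<inter> (\<lambda>x. c *s x) -` G)"
    by (intro openin_Union) (auto intro!: continuous_openin_preimage_gen continuous_on_smult G(1))
  thus "openin bdry_top (cline ` W)"
    unfolding bdry_top_def openin_quotient_topology eq[symmetric] using Wn by auto
qed

definition bdry4_top :: "quad topology" where
  "bdry4_top = prod_topology bdry_top (prod_topology bdry_top (prod_topology bdry_top bdry_top))"

lemma quads_top_eq: "quads_top = subtopology bdry4_top quads"
  by (simp add: quads_top_def bdry4_top_def)

lemma top_of_set_null4: "top_of_set null4 = prod_topology (top_of_set null_vecs)
    (prod_topology (top_of_set null_vecs) (prod_topology (top_of_set null_vecs) (top_of_set null_vecs)))"
  by (simp add: null4_def)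

lemma lines4_split: "lines4 = (\<lambda>(x, y). (cline x, (\<lambda>(x, y). (cline x, (\<lambda>(x, y). (cline x, cline y)) y)) y))"
  by (rule ext) (simp add: lines4_def split: prod.splits)

lemma open_map_lines4: "open_map (top_of_set null4) bdry4_top lines4"
  unfolding top_of_set_null4 bdry4_top_def lines4_split
  by (intro open_map_prod_topology open_map_cline)

lemma continuous_map_lines4: "continuous_map (top_of_set null4) bdry4_top lines4"
proof -
  have "continuous_map (top_of_set null_vecs) bdry_top cline"
    unfolding bdry_top_def by (rule quotient_imp_continuous_map[OF quotient_map_quotient_topology])
  thus ?thesis unfolding top_of_set_null4 bdry4_top_def lines4_split
    by (intro continuous_map_prod_top[THEN iffD2] disjI2 conjI)
qed

lemma continuous_on_herm [continuous_intros]: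
  "continuous_on S f \<Longrightarrow> continuous_on S g \<Longrightarrow> continuous_on S (\<lambda>x. herm (f x) (g x))"
  unfolding herm_def by (intro continuous_intros)

lemma continuous_on_vec3 [continuous_intros]:
  assumes "continuous_on S a" "continuous_on S b" "continuous_on S c"
  shows "continuous_on S (\<lambda>x. vec3 (a x) (b x) (c x))"
  unfolding vec3_def
proof (rule continuous_on_vec_lambda)
  fix i :: 3
  show "continuous_on S (\<lambda>x. if i = 1 then a x else if i = 2 then b x else c x)"
    using assms by (cases "i = 1"; cases "i = 2") auto
qed

lemma invariants4_fst_snd: "invariants4 v =
   (cross_ratio_vec (fst v) (fst (snd v)) (fst (snd (snd v))) (snd (snd (snd v))),
    cross_ratio_vec (fst v) (fst (snd (snd v))) (fst (snd v)) (snd (snd (snd v))),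
    Arg (cartan_vec (fst v) (fst (snd v)) (fst (snd (snd v)))))"
  by (simp add: invariants4_def split: prod.splits)

text \<open>The Cartan invariant of a generic quadruple lies in [-pi/2, pi/2], away from the
  branch cut of Arg.\<close>
lemma cartan_vec_notin_nonpos_Reals:
  assumes v: "v \<in> generic4"
  shows "cartan_vec (fst v) (fst (snd v)) (fst (snd (snd v))) \<notin> \<real>\<^sub>\<le>\<^sub>0"
proof
  let ?z = "cartan_vec (fst v) (fst (snd v)) (fst (snd (snd v)))"
  assume z: "?z \<in> \<real>\<^sub>\<le>\<^sub>0"
  have "?z \<noteq> 0" using v by (auto simp: cartan_vec_def generic4_def herm_eq_0_commute)
  hence "Arg ?z = pi"
    using z by (auto simp: complex_nonpos_Reals_iff complex_eq_iff Arg_eq_pi)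
  moreover have "Arg ?z \<le> pi / 2"
    using invariants4_in_Mset[OF v] by (simp add: invariants4_fst_snd Mset_def)
  ultimately show False using pi_gt_zero by linarith
qed

lemma continuous_on_invariants4: "continuous_on generic4 invariants4"
  unfolding invariants4_fst_snd[abs_def] cross_ratio_vec_def
  by (intro continuous_intros continuous_on_Arg' cartan_vec_notin_nonpos_Reals)
     (auto simp: cartan_vec_def generic4_def herm_eq_0_commute intro!: continuous_intros)

lemma openin_generic4: "openin (top_of_set null4) generic4"
proof -
  have "generic4 = null4 \<inter> {v. herm (fst v) (fst (snd v)) \<noteq> 0 \<and> herm (fst v) (fst (snd (snd v))) \<noteq> 0 \<and>
     herm (fst v) (snd (snd (snd v))) \<noteq> 0 \<and> herm (fst (snd v)) (fst (snd (snd v))) \<noteq> 0 \<and>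
     herm (fst (snd v)) (snd (snd (snd v))) \<noteq> 0 \<and> herm (fst (snd (snd v))) (snd (snd (snd v))) \<noteq> 0}"
    by (auto simp: generic4_def null4_def)
  moreover have "open {v::cvec \<times> cvec \<times> cvec \<times> cvec. herm (fst v) (fst (snd v)) \<noteq> 0 \<and>
     herm (fst v) (fst (snd (snd v))) \<noteq> 0 \<and> herm (fst v) (snd (snd (snd v))) \<noteq> 0 \<and>
     herm (fst (snd v)) (fst (snd (snd v))) \<noteq> 0 \<and> herm (fst (snd v)) (snd (snd (snd v))) \<noteq> 0 \<and>
     herm (fst (snd (snd v))) (snd (snd (snd v))) \<noteq> 0}"
    by (intro open_Collect_conj open_Collect_neq continuous_intros)
  ultimately show ?thesis by (auto simp: openin_open)
qed

lemma continuous_map_tau4: "continuous_map quads_top (top_of_set Mset) tau4"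
proof -
  have "continuous_map quads_top euclidean tau4"
    unfolding continuous_map topspace_quads_top
  proof (intro conjI allI impI)
    show "tau4 ` quads \<subseteq> topspace euclidean" by simp
    fix V :: "(complex \<times> complex \<times> real) set" assume "openin euclidean V"
    hence "openin (top_of_set generic4) (generic4 \<inter> invariants4 -` V)"
      using continuous_openin_preimage_gen[OF continuous_on_invariants4] by simp
    hence "openin (top_of_set null4) (generic4 \<inter> invariants4 -` V)"
      using openin_generic4 openin_trans by blast
    hence "openin bdry4_top (lines4 ` (generic4 \<inter> invariants4 -` V))"
      using open_map_lines4 unfolding open_map_def by blast
    moreover have "lines4 ` (generic4 \<inter> invariants4 -` V) = {q \<in> quads. tau4 q \<in> V}"
    proof (intro set_eqI iffI)
      fix q assume "q \<in> lines4 ` (generic4 \<inter> invariants4 -` V)"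
      then obtain v where "v \<in> generic4" "invariants4 v \<in> V" "q = lines4 v" by blast
      thus "q \<in> {q \<in> quads. tau4 q \<in> V}" using quads_iff_lines4 tau4_lines4 by auto
    next
      fix q assume "q \<in> {q \<in> quads. tau4 q \<in> V}"
      then obtain v where "v \<in> generic4" "q = lines4 v" "tau4 q \<in> V" using quads_iff_lines4 by auto
      thus "q \<in> lines4 ` (generic4 \<inter> invariants4 -` V)" using tau4_lines4 by auto
    qed
    ultimately show "openin quads_top {q \<in> quads. tau4 q \<in> V}"
      unfolding quads_top_eq openin_subtopology by blast
  qed
  moreover have "tau4 ` topspace quads_top \<subseteq> Mset" using tau4_in_Mset topspace_quads_top by auto
  ultimately show ?thesis by (auto simp: continuous_map_in_subtopology)
qed

lemma closedin_lift_params: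
  "closedin (top_of_set (Mset \<times> sphere 0 1 \<times> sphere 0 1)) lift_params"
proof -
  define g where "g t = of_real (norm_z4 (fst t)) * snd (snd t) * cnj (of_real (norm_z3 (fst t)) * fst (snd t))
      - z4_cnj_z3 (fst t)" for t :: "(complex \<times> complex \<times> real) \<times> complex \<times> complex"
  have "continuous_on (Mset \<times> sphere 0 1 \<times> sphere 0 1) g"
    unfolding g_def norm_z3_def norm_z4_def z4_cnj_z3_def split_def by (intro continuous_intros)
  hence "closedin (top_of_set (Mset \<times> sphere 0 1 \<times> sphere 0 1))
      {t \<in> Mset \<times> sphere 0 1 \<times> sphere 0 1. g t = 0}"
    by (rule continuous_closedin_preimage_constant)
  moreover have "lift_params = {t \<in> Mset \<times> sphere 0 1 \<times> sphere 0 1. g t = 0}"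
    by (auto simp: lift_params_def g_def)
  ultimately show ?thesis by simp
qed

lemma quotient_map_fst_lift_params: "quotient_map (top_of_set lift_params) (top_of_set Mset) fst"
proof (rule continuous_closed_imp_quotient_map)
  have fst_eq: "fst ` lift_params = Mset"
    using lift_params_fiber_nonempty by (force simp: lift_params_def)
  thus "continuous_map (top_of_set lift_params) (top_of_set Mset) fst"
    by (auto simp: continuous_map_in_subtopology intro!: continuous_intros)
  show "fst ` topspace (top_of_set lift_params) = topspace (top_of_set Mset)" using fst_eq by simp
  have "compact_space (top_of_set (sphere (0::complex) 1 \<times> sphere (0::complex) 1))"
    by (simp add: compact_space_subtopology compact_Times)
  hence "closed_map (top_of_set (Mset \<times> sphere (0::complex) 1 \<times> sphere (0::complex) 1))
      (top_of_set Mset) fst"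
    using closed_map_fst[of "top_of_set (sphere (0::complex) 1 \<times> sphere 0 1)" "top_of_set Mset"]
    by simp
  thus "closed_map (top_of_set lift_params) (top_of_set Mset) fst"
    using closedin_lift_params closedin_trans unfolding closed_map_def by blast
qed

lemma continuous_map_lines4_normal_lift:
  "continuous_map (top_of_set lift_params) quads_top (lines4 \<circ> normal_lift)"
proof -
  have "continuous_on lift_params normal_lift"
    unfolding normal_lift_def normal_form4_def norm_z3_def norm_z4_def split_def
    by (intro continuous_intros)
  hence "continuous_map (top_of_set lift_params) (top_of_set null4) normal_lift"
    using normal_lift_props(1) generic4_subset_null4 by (auto simp: continuous_map_in_subtopology)
  hence "continuous_map (top_of_set lift_params) bdry4_top (lines4 \<circ> normal_lift)"
    using continuous_map_lines4 continuous_map_compose by blast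
  moreover have "(lines4 \<circ> normal_lift) ` lift_params \<subseteq> quads"
    unfolding image_subset_iff comp_apply using normal_lift_props(1) quads_iff_lines4 by blast
  ultimately show ?thesis unfolding quads_top_eq by (auto simp: continuous_map_in_subtopology)
qed

lemma quotient_map_tau4: "quotient_map quads_top (top_of_set Mset) tau4"
proof (rule quotient_map_from_composition[OF continuous_map_lines4_normal_lift continuous_map_tau4])
  show "quotient_map (top_of_set lift_params) (top_of_set Mset) (tau4 \<circ> (lines4 \<circ> normal_lift))"
    using quotient_map_fst_lift_params
    by (rule quotient_map_eq) (simp add: tau4_lines4 normal_lift_props(2))
qed

lemma quotient_map_tau: "quotient_map config_top (top_of_set Mset) tau"
proof -
  have "quotient_map quads_top (top_of_set Mset) (tau \<circ> orbit4)"
    using quotient_map_tau4 by (rule quotient_map_eq) (simp add: topspace_quads_top tau_orbit4)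
  moreover have "continuous_map config_top (top_of_set Mset) tau"
    using continuous_compose_quotient_map[OF quotient_map_orbit4] calculation
      quotient_imp_continuous_map by blast
  ultimately show ?thesis
    using quotient_map_from_composition quotient_imp_continuous_map[OF quotient_map_orbit4] by blast
qed

lemma inj_on_tau: "inj_on tau (topspace config_top)"
  unfolding topspace_config_top
proof (rule inj_onI)
  fix x y assume "x \<in> orbit4 ` quads" "y \<in> orbit4 ` quads" and e: "tau x = tau y"
  then obtain q q' where q: "q \<in> quads" "x = orbit4 q" and q': "q' \<in> quads" "y = orbit4 q'"
    by auto
  obtain t where t: "t \<in> lift_params" "congruent4 q (lines4 (normal_lift t))"
    using quads_congruent_normal_lift[OF q(1)] by blast
  obtain t' where t': "t' \<in> lift_params" "congruent4 q' (lines4 (normal_lift t'))"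
    using quads_congruent_normal_lift[OF q'(1)] by blast
  have "fst t = tau4 q" "fst t' = tau4 q'"
    using tau4_congruent4[OF t(2) q(1)] tau4_congruent4[OF t'(2) q'(1)] normal_lift_props(2) t t'
    by (simp_all add: tau4_lines4)
  moreover have "tau4 q = tau4 q'" using e q q' tau_orbit4 by simp
  ultimately have "congruent4 (lines4 (normal_lift t)) (lines4 (normal_lift t'))"
    using normal_lift_fiber_congruent4 t(1) t'(1) by (metis prod.collapse)
  hence "congruent4 q q'" using t(2) t'(2) congruent4_trans congruent4_sym by blast
  thus "x = y" using q q' orbit4_eq_if_congruent4 by simp
qed

theorem theorem3p1:
  shows "homeomorphic_map config_top (subtopology euclidean Mset) tau \<and>
         config_top homeomorphic_space subtopology euclidean Mset"
proof -
  have "homeomorphic_map config_top (subtopology euclidean Mset) tau"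
    unfolding homeomorphic_map_def using quotient_map_tau inj_on_tau by simp
  thus ?thesis unfolding homeomorphic_space_def homeomorphic_map_maps by blast
qed

end
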